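(* Suppose that Assumptions 1--5 and Assumption 8 hold. Furthermore, suppose that $V_{1}(x_{1}^{aug})=x_{1}^{aug,T}Qx_{1}^{aug}$ and $V_{2}(\tilde{x})=\tilde{x}^{T}P\tilde{x}$, along with scalars $\alpha_{1}>0$, $\alpha_{2}>0$, $\bar{\gamma}_{1}>0$, $\bar{\gamma}_{21}>0$, $\bar{\gamma}_{22}\geq 0$ such that, under $v_{des}(k)=-K_{1}x_{1}^{aug}(k)$ and $u(k)=K_{21}v_{des}(k)-K_{22}x_{2}(k)$, \begin{eqnarray*} V_{1}(x_{1}^{aug}(k+1))-V_{1}(x_{1}^{aug}(k)) &<& -\alpha_{1} V_{1}(x_{1}^{aug}(k)) + \bar{\gamma}_{1} \|\tilde{v}(k)\|^{2},\\ V_{2}(\tilde{x}(k+1))-V_{2}(\tilde{x}(k)) &<& -\alpha_{2}V_{2}(\tilde{x}(k)) + \bar{\gamma}_{21} \|v_{des}(k)\|^{2} + \bar{\gamma}_{22} \|x_{f}(k)\|^{2}, \end{eqnarray*} together with the matrices $C$ and $K_{1}$, satisfy \begin{equation*} \alpha_{1}\alpha_{2}\bar{\lambda}_{min}(P)\bar{\lambda}_{min}(Q) \geq \bar{\gamma}_{1}\|C\|^{2}(\bar{\gamma}_{21}\|K_{1}\|^{2}+\bar{\gamma}_{22}), \end{equation*} where $\bar{\lambda}_{min}(P)$ and $\bar{\lambda}_{min}(Q)$ are the minimum eigenvalues of $P$ and $Q$. Then there exist sets $G_{1} \subset \mathbb{R}^{n_{1}+n_{2}}$ and $G_{2} \subset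 \mathbb{R}^{n_{2}}$, along with scalars $0 \leq \lambda_{1} < 1$ and $0 \leq \lambda_{2} < 1$, such that if $x_{1}^{aug}(k) \in G_{1}$, $\tilde{x}(k) \in G_{2}$, $v_{des}(k) = -K_{1}x_{1}(k)$, and $u(k) = K_{21}v_{des}(k) - K_{22}x_{2}(k)$, then $u(k) \in U$, $x_{1}^{aug}(k+1) \in \lambda_{1}G_{1}$, and $\tilde{x}(k+1) \in \lambda_{2}G_{2}$.
   Context: Setting: cascade $x_{1}(k+1)=A_{1}x_{1}(k)+B_{1}v(k)$, $x_{2}(k+1)=A_{2}x_{2}(k)+B_{2}u(k)$, $v=Cx_{2}$, $u(k)\in U$; reference model $x_{f}(k+1)=A_{f}x_{f}(k)+B_{f}v_{des}(k)$; error $\tilde{x}=x_{2}-x_{f}$, $\tilde{v}=C\tilde{x}$, $\tilde{x}(k+1)=A_{2}\tilde{x}(k)+(A_{2}-A_{f})x_{f}(k)+B_{2}u(k)-B_{f}v_{des}(k)$; augmented outer state $x_{1}^{aug}=[x_{1}^{T}\ x_{f}^{T}]^{T}$ with $x_{1}^{aug}(k+1)=A_{1}^{aug}x_{1}^{aug}(k)+B_{1}^{aug}\tilde{v}(k)+B_{f}^{aug}v_{des}(k)$, $A_{1}^{aug}=\begin{bmatrix}A_{1}&B_{1}C\\0&A_{f}\end{bmatrix}$, $B_{1}^{aug}=[B_{1}^{T}\ 0]^{T}$, $B_{f}^{aug}=[0\ B_{f}^{T}]^{T}$. Assumptions: (1) $(A_{1},B_{1})$ stabilizable; (2) $(A_{2},B_{2})$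 controllable; (3) actuator dynamics in block controllable canonical form; (4) $A_{f}$ Schur stable; (5) reference model shares no zeros with unstable poles of $A_{1}$; (8) $u=0$ is in the interior of $U$. The gains are chosen so that $A_{1}^{aug}-B_{1}^{aug}K_{1}$ and $A_{2}-B_{2}K_{22}$ are Schur; $Q,P$ are symmetric positive definite. For a set $G$, $\lambda G=\{\lambda x:x\in G\}$. (The paper writes $v_{des}(k)=-K_{1}x_{1}(k)$, presumably meaning $-K_{1}x_{1}^{aug}(k)$.) *)

theory Defs
  imports "HOL-Analysis.Analysis"
begin

text \<open>Complexification of real matrices (eigenvalues are taken over the complex numbers).\<close>
definition cmat :: "real^'n^'m \<Rightarrow> complex^'n^'m" where
  "cmat A = (\<chi> i j. complex_of_real (A$i$j))"

definition is_eigenvalue :: "real^'n^'n \<Rightarrow> complex \<Rightarrow> bool" where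
  "is_eigenvalue A z \<longleftrightarrow> (\<exists>w::complex^'n. w \<noteq> 0 \<and> cmat A *v w = z *s w)"

definition schur_stable :: "real^'n^'n \<Rightarrow> bool" where
  "schur_stable A \<longleftrightarrow> (\<forall>z. is_eigenvalue A z \<longrightarrow> cmod z < 1)"

definition stabilizable :: "real^'n^'n \<Rightarrow> real^'p^'n \<Rightarrow> bool" where
  "stabilizable A B \<longleftrightarrow> (\<exists>K::real^'n^'p. schur_stable (A - B ** K))"

definition controllable :: "real^'n^'n \<Rightarrow> real^'p^'n \<Rightarrow> bool" where
  "controllable A B \<longleftrightarrow>
     span (\<Union>k<CARD('n). range (\<lambda>u. ((\<lambda>x. A *v x) ^^ k) (B *v u))) = UNIV"

text \<open>The state is split (via the bijection
  idx) into r blocks of size p (block index, position in block); block i (i < r-1) has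
  x_i(k+1) = x_(i+1)(k); the last block row of A is arbitrary; B = [0; ...; 0; I].\<close>
definition block_ccf :: "real^'n^'n \<Rightarrow> real^'p^'n \<Rightarrow> bool" where
  "block_ccf A B \<longleftrightarrow> (\<exists>(r::nat) (idx::'n \<Rightarrow> nat \<times> 'p).
      bij_betw idx UNIV ({..<r} \<times> UNIV) \<and>
      (\<forall>i j. fst (idx i) + 1 < r \<longrightarrow>
           A$i$j = (if idx j = (fst (idx i) + 1, snd (idx i)) then 1 else 0)) \<and>
      (\<forall>i q. B$i$q = (if idx i = (r - 1, q) then 1 else 0)))"

text \<open>Invariant (transmission) zeros of the square system (Af, Bf, C): z such that the
  Rosenbrock matrix [zI - Af, -Bf; C, 0] is singular.\<close>
definition invariant_zero :: "real^'n^'n \<Rightarrow> real^'m^'n \<Rightarrow> real^'n^'m \<Rightarrow> complex \<Rightarrow> bool" where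
  "invariant_zero Af Bf C z \<longleftrightarrow> (\<exists>(w::complex^'n) (q::complex^'m).
      (w \<noteq> 0 \<or> q \<noteq> 0) \<and> z *s w - cmat Af *v w - cmat Bf *v q = 0 \<and> cmat C *v w = 0)"

definition unstable_pole :: "real^'n^'n \<Rightarrow> complex \<Rightarrow> bool" where
  "unstable_pole A z \<longleftrightarrow> is_eigenvalue A z \<and> 1 \<le> cmod z"

definition sym_posdef :: "real^'n^'n \<Rightarrow> bool" where
  "sym_posdef P \<longleftrightarrow> transpose P = P \<and> (\<forall>x. x \<noteq> 0 \<longrightarrow> 0 < x \<bullet> (P *v x))"

definition lambda_min :: "real^'n^'n \<Rightarrow> real" where
  "lambda_min P = Min {c. \<exists>x. x \<noteq> 0 \<and> P *v x = c *\<^sub>R x}"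

definition mat_norm :: "real^'n^'m \<Rightarrow> real" where
  "mat_norm M = onorm (\<lambda>x. M *v x)"

definition vappend :: "real^'a \<Rightarrow> real^'b \<Rightarrow> real^('a + 'b)" where
  "vappend x y = (\<chi> i. case i of Inl a \<Rightarrow> x$a | Inr b \<Rightarrow> y$b)"

definition A1aug :: "real^'n1^'n1 \<Rightarrow> real^'m^'n1 \<Rightarrow> real^'n2^'m \<Rightarrow> real^'n2^'n2
                     \<Rightarrow> real^('n1 + 'n2)^('n1 + 'n2)" where
  "A1aug A1 B1 C Af = (\<chi> i j. case (i, j) of
       (Inl a, Inl b) \<Rightarrow> A1$a$b
     | (Inl a, Inr b) \<Rightarrow> (B1 ** C)$a$b
     | (Inr a, Inl b) \<Rightarrow> 0
     | (Inr a, Inr b) \<Rightarrow> Af$a$b)"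

definition B1aug :: "real^'m^'n1 \<Rightarrow> real^'m^('n1 + 'n2::finite)" where
  "B1aug B1 = (\<chi> i j. case i of Inl a \<Rightarrow> B1$a$j | Inr b \<Rightarrow> 0)"

definition Bfaug :: "real^'m^'n2 \<Rightarrow> real^'m^('n1::finite + 'n2)" where
  "Bfaug Bf = (\<chi> i j. case i of Inl a \<Rightarrow> 0 | Inr b \<Rightarrow> Bf$b$j)"

end

theory Submission
  imports Defs
begin

text \<open>Take as invariant sets the sublevel sets \<open>V1 \<le> c1\<close> and \<open>V2 \<le> c2\<close>. On their product the
  coupling terms of the two dissipation inequalities are at most
  \<open>\<gamma>1 \<parallel>C\<parallel>\<^sup>2 c2 / \<lambda>min(P)\<close> and \<open>(\<gamma>21 \<parallel>K1\<parallel>\<^sup>2 + \<gamma>22) c1 / \<lambda>min(Q)\<close>, and the small-gain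
  condition is exactly what allows the ratio \<open>c2 / c1\<close> to be chosen so that these are at most
  \<open>\<alpha>1 c1\<close> and \<open>\<alpha>2 c2\<close>. Then both Lyapunov functions end strictly below their levels after
  one step, uniformly by compactness, which yields the contraction factors. Shrinking both
  levels at a fixed ratio keeps all this and makes the sets so small that the control stays in
  the neighbourhood \<open>U\<close> of the origin. At the states where the dissipation inequalities are not
  assumed (\<open>x1aug = 0\<close> resp. \<open>x2 = xf\<close>) their non-strict forms follow by continuity.\<close>

definition quad_form :: "real^'n^'n \<Rightarrow> real^'n \<Rightarrow> real" where
  "quad_form P x = x \<bullet> (P *v x)"

lemma quad_form_0 [simp]: "quad_form P 0 = 0"
  by (simp add: quad_form_def)

lemma quad_form_scaleR: "quad_form P (s *\<^sub>R x) = s\<^sup>2 * quad_form P x"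
  by (simp add: quad_form_def matrix_vector_mult_scaleR power2_eq_square)

lemma inner_matrix_vector_symmetric:
  assumes "transpose P = P"
  shows "x \<bullet> (P *v y) = (P *v x) \<bullet> (y::real^'n)"
  by (metis assms dot_lmul_matrix transpose_matrix_vector)

lemma quad_form_add_scaleR:
  assumes "transpose P = P"
  shows "quad_form P (x + t *\<^sub>R y) = quad_form P x + 2 * t * (y \<bullet> (P *v x)) + t\<^sup>2 * quad_form P y"
proof -
  have "x \<bullet> (P *v y) = y \<bullet> (P *v x)"
    using inner_matrix_vector_symmetric[OF assms] by (simp add: inner_commute)
  then show ?thesis
    by (simp add: quad_form_def matrix_vector_right_distrib matrix_vector_mult_scaleR
        inner_add_left inner_add_right algebra_simps power2_eq_square)
qed

lemma continuous_on_quad_form [continuous_intros]: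
  "continuous_on S f \<Longrightarrow> continuous_on S (\<lambda>z. quad_form P (f z))"
  unfolding quad_form_def
  by (intro continuous_intros bounded_linear.continuous_on[OF matrix_vector_mul_bounded_linear])

lemma continuous_on_matrix_vector_mult [continuous_intros]:
  fixes A :: "real^'n^'m"
  shows "continuous_on S f \<Longrightarrow> continuous_on S (\<lambda>z. A *v f z)"
  by (rule bounded_linear.continuous_on[OF matrix_vector_mul_bounded_linear])

lemma sym_posdef_quad_form_pos: "sym_posdef P \<Longrightarrow> x \<noteq> 0 \<Longrightarrow> 0 < quad_form P x"
  by (simp add: sym_posdef_def quad_form_def)

lemma sym_posdef_quad_form_nonneg: "sym_posdef P \<Longrightarrow> 0 \<le> quad_form P x"
  by (cases "x = 0") (auto dest: sym_posdef_quad_form_pos)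

lemma linear_coeff_eq_0_if_quadratic_nonneg:
  fixes d e :: real
  assumes "\<And>t. 0 \<le> 2 * t * d + t\<^sup>2 * e"
  shows "d = 0"
proof (rule ccontr)
  assume "d \<noteq> 0"
  define s where "s = \<bar>e\<bar> + 1"
  have "s > 0" by (simp add: s_def)
  \<comment> \<open>the quadratic is negative at t = -d/s\<close>
  have "0 \<le> (2 * (- d / s) * d + (- d / s)\<^sup>2 * e) * s\<^sup>2"
    using assms[of "- d / s"] by simp
  also have "\<dots> = d\<^sup>2 * (e - 2 * s)"
    using \<open>s > 0\<close> by (simp add: field_simps power2_eq_square)
  finally have "0 \<le> d\<^sup>2 * (e - 2 * s)" .
  moreover have "d\<^sup>2 > 0" using \<open>d \<noteq> 0\<close> by simp
  moreover have "e - 2 * s < 0" by (simp add: s_def abs_if)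
  ultimately show False
    using mult_pos_neg[of "d\<^sup>2" "e - 2 * s"] by linarith
qed

lemma rayleigh_minimiser_eigenvector:
  fixes P :: "real^'n^'n"
  assumes sym: "transpose P = P"
    and lower: "\<And>x. \<mu> * (norm x)\<^sup>2 \<le> quad_form P x"
    and attained: "quad_form P x0 = \<mu> * (norm x0)\<^sup>2"
  shows "P *v x0 = \<mu> *\<^sub>R x0"
proof -
  define w where "w = P *v x0 - \<mu> *\<^sub>R x0"
  have "0 \<le> 2 * t * (w \<bullet> w) + t\<^sup>2 * (quad_form P w - \<mu> * (w \<bullet> w))" for t
  proof -
    have "\<mu> * (norm (x0 + t *\<^sub>R w))\<^sup>2 \<le> quad_form P (x0 + t *\<^sub>R w)"
      by (rule lower)
    moreover have "(norm (x0 + t *\<^sub>R w))\<^sup>2 = (norm x0)\<^sup>2 + 2 * t * (w \<bullet> x0) + t\<^sup>2 * (w \<bullet> w)"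
      unfolding power2_norm_eq_inner
      by (simp add: inner_add_left inner_add_right inner_commute algebra_simps power2_eq_square)
    moreover have "w \<bullet> (P *v x0) - \<mu> * (w \<bullet> x0) = w \<bullet> w"
      by (simp add: w_def inner_diff_right)
    ultimately show ?thesis
      using quad_form_add_scaleR[OF sym, of x0 t w] attained by (simp add: algebra_simps)
  qed
  then have "w \<bullet> w = 0"
    by (rule linear_coeff_eq_0_if_quadratic_nonneg)
  then show ?thesis
    by (simp add: w_def)
qed

lemma symmetric_matrix_finite_eigenvalues:
  fixes P :: "real^'n^'n"
  assumes sym: "transpose P = P"
  shows "finite {c. \<exists>x. x \<noteq> 0 \<and> P *v x = c *\<^sub>R x}"
proof (rule ccontr)
  assume "infinite {c. \<exists>x. x \<noteq> 0 \<and> P *v x = c *\<^sub>R x}"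
  then obtain T where T: "finite T" "card T = CARD('n) + 1"
      "T \<subseteq> {c. \<exists>x. x \<noteq> 0 \<and> P *v x = c *\<^sub>R x}"
    using infinite_arbitrarily_large by blast
  then have "\<forall>c\<in>T. \<exists>x. x \<noteq> 0 \<and> P *v x = c *\<^sub>R x"
    by blast
  then obtain e where e: "\<And>c. c \<in> T \<Longrightarrow> e c \<noteq> 0 \<and> P *v e c = c *\<^sub>R e c"
    by metis
  have orth: "e c \<bullet> e d = 0" if "c \<in> T" "d \<in> T" "c \<noteq> d" for c d
  proof -
    have "c * (e c \<bullet> e d) = (P *v e c) \<bullet> e d" using e[OF that(1)] by simp
    also have "\<dots> = e c \<bullet> (P *v e d)" using inner_matrix_vector_symmetric[OF sym] by simp
    also have "\<dots> = d * (e c \<bullet> e d)" using e[OF that(2)] by simp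
    finally show ?thesis using that(3) by simp
  qed
  have "inj_on e T"
    by (rule inj_onI) (metis e inner_eq_zero_iff orth)
  have "independent (e ` T)"
    by (rule pairwise_orthogonal_independent)
      (use e orth in \<open>auto simp: pairwise_def orthogonal_def\<close>)
  then have "card (e ` T) \<le> CARD('n)"
    using independent_bound by fastforce
  then show False
    using card_image[OF \<open>inj_on e T\<close>] T(2) by simp
qed

lemma sym_posdef_rayleigh_minimum:
  fixes P :: "real^'n^'n"
  assumes "sym_posdef P"
  obtains \<mu> x0 where "\<mu> > 0" "\<And>x. \<mu> * (norm x)\<^sup>2 \<le> quad_form P x"
    "x0 \<noteq> 0" "P *v x0 = \<mu> *\<^sub>R x0"
proof -
  have sym: "transpose P = P"
    using assms by (simp add: sym_posdef_def)
  have "sphere (0::real^'n) 1 \<noteq> {}"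
    using norm_axis_1 by (metis mem_sphere_0 empty_iff)
  from continuous_attains_inf[OF compact_sphere this continuous_on_quad_form[where P=P, OF continuous_on_id]]
  obtain x0 where x0: "norm x0 = 1" and min: "\<And>y. norm y = 1 \<Longrightarrow> quad_form P x0 \<le> quad_form P y"
    by auto
  define \<mu> where "\<mu> = quad_form P x0"
  have lower: "\<mu> * (norm x)\<^sup>2 \<le> quad_form P x" for x
  proof (cases "x = 0")
    case False
    have "\<mu> \<le> quad_form P ((1 / norm x) *\<^sub>R x)"
      using False by (auto simp: \<mu>_def intro: min)
    also have "\<dots> = quad_form P x / (norm x)\<^sup>2"
      by (simp add: quad_form_scaleR power_divide)
    finally show ?thesis
      using False by (simp add: field_simps)
  qed simp
  show thesis
  proof
    show "\<mu> > 0"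
      using sym_posdef_quad_form_pos[OF assms, of x0] x0 by (force simp: \<mu>_def)
    show "x0 \<noteq> 0"
      using x0 by auto
    show "P *v x0 = \<mu> *\<^sub>R x0"
      using x0 by (intro rayleigh_minimiser_eigenvector[OF sym lower]) (simp add: \<mu>_def)
  qed (rule lower)
qed

lemma sym_posdef_lambda_min:
  fixes P :: "real^'n^'n"
  assumes "sym_posdef P"
  shows "lambda_min P > 0" and "lambda_min P * (norm x)\<^sup>2 \<le> quad_form P x"
proof -
  obtain \<mu> x0 where \<mu>: "\<mu> > 0" and lower: "\<And>x. \<mu> * (norm x)\<^sup>2 \<le> quad_form P x"
    and "x0 \<noteq> 0" "P *v x0 = \<mu> *\<^sub>R x0"
    using sym_posdef_rayleigh_minimum[OF assms] by blast
  have "lambda_min P = \<mu>"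
    unfolding lambda_min_def
  proof (rule Min_eqI)
    show "finite {c. \<exists>x. x \<noteq> 0 \<and> P *v x = c *\<^sub>R x}"
      using assms by (intro symmetric_matrix_finite_eigenvalues) (simp add: sym_posdef_def)
    show "\<mu> \<le> c" if c: "c \<in> {c. \<exists>x. x \<noteq> 0 \<and> P *v x = c *\<^sub>R x}" for c
    proof -
      obtain x where "x \<noteq> 0" "P *v x = c *\<^sub>R x"
        using c by auto
      then show ?thesis
        using lower[of x] by (simp add: quad_form_def power2_norm_eq_inner)
    qed
  qed (use \<open>x0 \<noteq> 0\<close> \<open>P *v x0 = \<mu> *\<^sub>R x0\<close> in auto)
  then show "lambda_min P > 0" and "lambda_min P * (norm x)\<^sup>2 \<le> quad_form P x"
    using \<mu> lower by simp_all
qed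

lemma mat_norm_bound: "norm (M *v x) \<le> mat_norm M * norm x"
  unfolding mat_norm_def by (rule onorm[OF matrix_vector_mul_bounded_linear])

lemma mat_norm_nonneg: "0 \<le> mat_norm M"
  unfolding mat_norm_def by (rule onorm_pos_le[OF matrix_vector_mul_bounded_linear])

lemma norm_matrix_vector_sq_le_quad_form:
  fixes P :: "real^'n^'n" and M :: "real^'n^'m"
  assumes "sym_posdef P"
  shows "(norm (M *v x))\<^sup>2 * lambda_min P \<le> (mat_norm M)\<^sup>2 * quad_form P x"
proof -
  have "(norm (M *v x))\<^sup>2 \<le> (mat_norm M)\<^sup>2 * (norm x)\<^sup>2"
    using mat_norm_bound[of M x] by (metis norm_ge_zero power_mono power_mult_distrib)
  then have "(norm (M *v x))\<^sup>2 * lambda_min P \<le> (mat_norm M)\<^sup>2 * (lambda_min P * (norm x)\<^sup>2)"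
    using sym_posdef_lambda_min(1)[OF assms] by (simp add: mult_right_mono algebra_simps)
  also have "\<dots> \<le> (mat_norm M)\<^sup>2 * quad_form P x"
    by (simp add: mult_left_mono sym_posdef_lambda_min(2)[OF assms])
  finally show ?thesis .
qed

lemma quad_form_sublevel_scaleR:
  assumes "l \<noteq> 0"
  shows "(\<lambda>x. l *\<^sub>R x) ` {x. quad_form P x \<le> c} = {y. quad_form P y \<le> l\<^sup>2 * c}"
proof (intro set_eqI iffI)
  fix y
  assume "y \<in> (\<lambda>x. l *\<^sub>R x) ` {x. quad_form P x \<le> c}"
  then show "y \<in> {y. quad_form P y \<le> l\<^sup>2 * c}"
    by (auto simp: quad_form_scaleR mult_left_mono)
next
  fix y
  assume "y \<in> {y. quad_form P y \<le> l\<^sup>2 * c}"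
  then have "quad_form P ((1 / l) *\<^sub>R y) \<le> c"
    using assms by (simp add: quad_form_scaleR power_divide field_simps)
  moreover have "y = l *\<^sub>R ((1 / l) *\<^sub>R y)"
    using assms by simp
  ultimately show "y \<in> (\<lambda>x. l *\<^sub>R x) ` {x. quad_form P x \<le> c}"
    by blast
qed

lemma zero_in_interior_quad_form_sublevel:
  assumes "c > 0"
  shows "0 \<in> interior {x. quad_form P x \<le> c}"
proof (rule interiorI)
  show "open {x. quad_form P x < c}"
    by (intro open_Collect_less continuous_intros)
qed (use assms in auto)

lemma vappend_norm_sq: "(norm (vappend x y))\<^sup>2 = (norm x)\<^sup>2 + (norm y)\<^sup>2"
proof -
  have "(norm (vappend x y))\<^sup>2 = (\<Sum>i\<in>UNIV <+> UNIV. (vappend x y $ i)\<^sup>2)"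
    by (simp only: power2_norm_eq_inner inner_vec_def inner_real_def UNIV_Plus_UNIV)
      (simp add: power2_eq_square)
  also have "\<dots> = (\<Sum>i\<in>UNIV. (x $ i)\<^sup>2) + (\<Sum>i\<in>UNIV. (y $ i)\<^sup>2)"
    by (subst sum.Plus) (auto simp: vappend_def)
  also have "\<dots> = (norm x)\<^sup>2 + (norm y)\<^sup>2"
    by (simp only: power2_norm_eq_inner inner_vec_def inner_real_def) (simp add: power2_eq_square)
  finally show ?thesis .
qed

lemma norm_le_vappend_left: "norm x \<le> norm (vappend x y)"
  using vappend_norm_sq[of x y] by (simp add: power2_le_imp_le)

lemma norm_le_vappend_right: "norm y \<le> norm (vappend x y)"
  using vappend_norm_sq[of x y] by (simp add: power2_le_imp_le)

lemma vappend_eq_0_iff [simp]: "vappend x y = 0 \<longleftrightarrow> x = 0 \<and> y = 0"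
  using vappend_norm_sq[of x y] by (metis add_nonneg_eq_0_iff zero_le_power2 norm_eq_zero power_zero_numeral zero_eq_power2)

lemma vappend_zero [simp]: "vappend 0 0 = 0"
  by simp

lemma continuous_on_vappend [continuous_intros]:
  assumes "continuous_on S f" "continuous_on S g"
  shows "continuous_on S (\<lambda>z. vappend (f z) (g z))"
  unfolding vappend_def
proof (rule continuous_on_vec_lambda)
  show "continuous_on S (\<lambda>z. case i of Inl a \<Rightarrow> f z $ a | Inr b \<Rightarrow> g z $ b)" for i
    by (cases i) (auto intro!: continuous_intros assms)
qed

lemma isCont_if_continuous_on_UNIV: "continuous_on UNIV g \<Longrightarrow> isCont g z"
  by (simp add: continuous_on_eq_continuous_at)

lemma nonpos_if_nonpos_along_ray:
  fixes F :: "'a::real_normed_vector \<Rightarrow> real"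
  assumes "isCont F z" "\<And>e. e > 0 \<Longrightarrow> F (z + e *\<^sub>R w) \<le> 0"
  shows "F z \<le> 0"
proof (rule tendsto_upperbound)
  have "((\<lambda>e. z + e *\<^sub>R w) \<longlongrightarrow> z) (at_right 0)"
    by (intro tendsto_eq_intros) auto
  then show "((\<lambda>e. F (z + e *\<^sub>R w)) \<longlongrightarrow> F z) (at_right (0::real))"
    by (rule isCont_tendsto_compose[OF assms(1)])
  show "\<forall>\<^sub>F e in at_right 0. F (z + e *\<^sub>R w) \<le> 0"
    using assms(2) by (auto intro: eventually_at_rightI[of 0 1])
qed (simp add: trivial_limit_at_right_real)

lemma compact_uniform_contraction_factor:
  fixes g :: "'a::topological_space \<Rightarrow> real"
  assumes "compact S" "continuous_on S g" "c > 0" "\<And>z. z \<in> S \<Longrightarrow> g z < c"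
  obtains l where "0 < l" "l < 1" "\<And>z. z \<in> S \<Longrightarrow> g z \<le> l\<^sup>2 * c"
proof -
  obtain M where "M < c" "\<And>z. z \<in> S \<Longrightarrow> g z \<le> M"
  proof (cases "S = {}")
    case False
    then obtain z0 where "z0 \<in> S" "\<And>z. z \<in> S \<Longrightarrow> g z \<le> g z0"
      using continuous_attains_sup[OF assms(1) _ assms(2)] by blast
    then show thesis
      using that assms(4) by blast
  qed (use that assms(3) in auto)
  define l where "l = sqrt (max M (c / 2) / c)"
  have "l\<^sup>2 * c = max M (c / 2)"
    using assms(3) by (simp add: l_def)
  moreover have "0 < l" "l < 1"
    using \<open>M < c\<close> assms(3) by (auto simp: l_def)
  ultimately show thesis
    using that \<open>\<And>z. z \<in> S \<Longrightarrow> g z \<le> M\<close> by fastforce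
qed

lemma small_gain_balance:
  fixes k1 k2 p q :: real
  assumes "0 \<le> k1" "0 \<le> k2" "0 < p" "0 < q" "k1 * k2 \<le> p * q"
  obtains \<rho> where "\<rho> > 0" "k1 * \<rho> \<le> p" "k2 \<le> q * \<rho>"
proof (cases "k1 = 0")
  case True
  show thesis
    by (rule that[of "k2 / q + 1"]) (use True assms in \<open>auto simp: field_simps\<close>)
next
  case False
  then have "k1 > 0"
    using assms(1) by simp
  show thesis
    by (rule that[of "p / k1"]) (use \<open>k1 > 0\<close> assms in \<open>auto simp: field_simps mult.commute\<close>)
qed

locale cascade_small_gain =
  fixes A1 :: "real^'n1^'n1" and B1 :: "real^'m^'n1"
    and A2 :: "real^'n2^'n2" and B2 :: "real^'p^'n2"
    and C :: "real^'n2^'m"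
    and Af :: "real^'n2^'n2" and Bf :: "real^'m^'n2"
    and U :: "(real^'p) set"
    and K1 :: "real^('n1 + 'n2)^'m" and K21 :: "real^'m^'p" and K22 :: "real^'n2^'p"
    and Q :: "real^('n1 + 'n2)^('n1 + 'n2)" and P :: "real^'n2^'n2"
    and \<alpha>1 \<alpha>2 \<gamma>1 \<gamma>21 \<gamma>22 :: real
  assumes U_nhd: "0 \<in> interior U"
    and Qpd: "sym_posdef Q" and Ppd: "sym_posdef P"
    and pos: "\<alpha>1 > 0" "\<alpha>2 > 0" "\<gamma>1 > 0" "\<gamma>21 > 0" "\<gamma>22 \<ge> 0"
    and lyap: "\<And>(x1::real^'n1) (x2::real^'n2) (xf::real^'n2).
      let xa = vappend x1 xf; xt = x2 - xf;
          vd = - (K1 *v xa); u = K21 *v vd - K22 *v x2;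
          x1' = A1 *v x1 + B1 *v (C *v x2); x2' = A2 *v x2 + B2 *v u;
          xf' = Af *v xf + Bf *v vd;
          xa' = vappend x1' xf'; xt' = x2' - xf'
      in (xa \<noteq> 0 \<longrightarrow>
            xa' \<bullet> (Q *v xa') - xa \<bullet> (Q *v xa)
              < - \<alpha>1 * (xa \<bullet> (Q *v xa)) + \<gamma>1 * (norm (C *v xt))\<^sup>2) \<and>
         (xt \<noteq> 0 \<longrightarrow>
            xt' \<bullet> (P *v xt') - xt \<bullet> (P *v xt)
              < - \<alpha>2 * (xt \<bullet> (P *v xt)) + \<gamma>21 * (norm vd)\<^sup>2 + \<gamma>22 * (norm xf)\<^sup>2)"
    and smallgain: "\<alpha>1 * \<alpha>2 * lambda_min P * lambda_min Q
                     \<ge> \<gamma>1 * (mat_norm C)\<^sup>2 * (\<gamma>21 * (mat_norm K1)\<^sup>2 + \<gamma>22)"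
begin

text \<open>States are triples \<open>(x1, x2, xf)\<close>; \<open>aug\<close> and \<open>err\<close> are the augmented outer state
  \<open>x1aug\<close> and the tracking error \<open>x2 - xf\<close> of the paper.\<close>

definition aug :: "(real^'n1) \<times> (real^'n2) \<times> (real^'n2) \<Rightarrow> real^('n1 + 'n2)" where
  "aug z = vappend (fst z) (snd (snd z))"

definition err :: "(real^'n1) \<times> (real^'n2) \<times> (real^'n2) \<Rightarrow> real^'n2" where
  "err z = fst (snd z) - snd (snd z)"

definition vdes :: "(real^'n1) \<times> (real^'n2) \<times> (real^'n2) \<Rightarrow> real^'m" where
  "vdes z = - (K1 *v aug z)"

definition ctrl :: "(real^'n1) \<times> (real^'n2) \<times> (real^'n2) \<Rightarrow> real^'p" where
  "ctrl z = K21 *v vdes z - K22 *v fst (snd z)"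

definition xf_next :: "(real^'n1) \<times> (real^'n2) \<times> (real^'n2) \<Rightarrow> real^'n2" where
  "xf_next z = Af *v snd (snd z) + Bf *v vdes z"

definition aug_next :: "(real^'n1) \<times> (real^'n2) \<times> (real^'n2) \<Rightarrow> real^('n1 + 'n2)" where
  "aug_next z = vappend (A1 *v fst z + B1 *v (C *v fst (snd z))) (xf_next z)"

definition err_next :: "(real^'n1) \<times> (real^'n2) \<times> (real^'n2) \<Rightarrow> real^'n2" where
  "err_next z = A2 *v fst (snd z) + B2 *v ctrl z - xf_next z"

definition level_set :: "real \<Rightarrow> real \<Rightarrow> ((real^'n1) \<times> (real^'n2) \<times> (real^'n2)) set" where
  "level_set c1 c2 = {z. quad_form Q (aug z) \<le> c1 \<and> quad_form P (err z) \<le> c2}"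

lemmas state_map_defs = aug_def err_def vdes_def ctrl_def xf_next_def aug_next_def err_next_def

lemma dissipation_aug:
  assumes "aug z \<noteq> 0"
  shows "quad_form Q (aug_next z) < (1 - \<alpha>1) * quad_form Q (aug z) + \<gamma>1 * (norm (C *v err z))\<^sup>2"
  using assms lyap[of "fst z" "snd (snd z)" "fst (snd z)"]
  by (simp add: Let_def state_map_defs quad_form_def left_diff_distrib)

lemma dissipation_err:
  assumes "err z \<noteq> 0"
  shows "quad_form P (err_next z)
    < (1 - \<alpha>2) * quad_form P (err z) + \<gamma>21 * (norm (vdes z))\<^sup>2 + \<gamma>22 * (norm (snd (snd z)))\<^sup>2"
  using assms lyap[of "fst z" "snd (snd z)" "fst (snd z)"]
  by (simp add: Let_def state_map_defs quad_form_def left_diff_distrib)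

lemma continuous_on_state_maps [continuous_intros]:
  assumes "continuous_on S f"
  shows "continuous_on S (\<lambda>y. aug (f y))" "continuous_on S (\<lambda>y. err (f y))"
    "continuous_on S (\<lambda>y. vdes (f y))" "continuous_on S (\<lambda>y. ctrl (f y))"
    "continuous_on S (\<lambda>y. aug_next (f y))" "continuous_on S (\<lambda>y. err_next (f y))"
  using assms by (auto simp: state_map_defs intro!: continuous_intros)

lemma dissipation_aug_le:
  "quad_form Q (aug_next z) \<le> (1 - \<alpha>1) * quad_form Q (aug z) + \<gamma>1 * (norm (C *v err z))\<^sup>2"
proof (cases "aug z = 0")
  case True
  define F where "F y = quad_form Q (aug_next y)
    - ((1 - \<alpha>1) * quad_form Q (aug y) + \<gamma>1 * (norm (C *v err y))\<^sup>2)" for y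
  obtain v :: "real^'n1" where "v \<noteq> 0"
    by (metis axis_eq_0_iff zero_neq_one)
  \<comment> \<open>the strict inequality holds off the closed set where \<open>aug\<close> vanishes; pass to the limit along a ray\<close>
  have "F z \<le> 0"
  proof (rule nonpos_if_nonpos_along_ray[where w = "(v, 0, 0)"])
    show "isCont F z"
      unfolding F_def by (intro isCont_if_continuous_on_UNIV continuous_intros)
    fix e :: real
    assume "e > 0"
    then have "aug (z + e *\<^sub>R (v, 0, 0)) \<noteq> 0"
      using True \<open>v \<noteq> 0\<close> by (simp add: aug_def)
    then show "F (z + e *\<^sub>R (v, 0, 0)) \<le> 0"
      unfolding F_def using dissipation_aug by fastforce
  qed
  then show ?thesis
    by (simp add: F_def)
qed (rule less_imp_le[OF dissipation_aug])

lemma dissipation_err_le: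
  "quad_form P (err_next z)
    \<le> (1 - \<alpha>2) * quad_form P (err z) + \<gamma>21 * (norm (vdes z))\<^sup>2 + \<gamma>22 * (norm (snd (snd z)))\<^sup>2"
proof (cases "err z = 0")
  case True
  define F where "F y = quad_form P (err_next y) - ((1 - \<alpha>2) * quad_form P (err y)
    + \<gamma>21 * (norm (vdes y))\<^sup>2 + \<gamma>22 * (norm (snd (snd y)))\<^sup>2)" for y
  obtain v :: "real^'n2" where "v \<noteq> 0"
    by (metis axis_eq_0_iff zero_neq_one)
  have "F z \<le> 0"
  proof (rule nonpos_if_nonpos_along_ray[where w = "(0, v, 0)"])
    show "isCont F z"
      unfolding F_def by (intro isCont_if_continuous_on_UNIV continuous_intros)
    fix e :: real
    assume "e > 0"
    then have "err (z + e *\<^sub>R (0, v, 0)) \<noteq> 0"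
      using True \<open>v \<noteq> 0\<close> by (simp add: err_def algebra_simps)
    then show "F (z + e *\<^sub>R (0, v, 0)) \<le> 0"
      unfolding F_def using dissipation_err by fastforce
  qed
  then show ?thesis
    by (simp add: F_def)
qed (rule less_imp_le[OF dissipation_err])

lemma alpha1_lt_1: "\<alpha>1 < 1"
proof -
  obtain v :: "real^'n1" where "v \<noteq> 0"
    by (metis axis_eq_0_iff zero_neq_one)
  define z where "z = (v, 0 :: real^'n2, 0 :: real^'n2)"
  have "aug z \<noteq> 0" "err z = 0"
    using \<open>v \<noteq> 0\<close> by (simp_all add: z_def aug_def err_def)
  then have "0 < (1 - \<alpha>1) * quad_form Q (aug z)"
    using dissipation_aug[of z] sym_posdef_quad_form_nonneg[OF Qpd, of "aug_next z"] by simp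
  then show ?thesis
    using sym_posdef_quad_form_pos[OF Qpd \<open>aug z \<noteq> 0\<close>] by (simp add: zero_less_mult_iff)
qed

lemma alpha2_lt_1: "\<alpha>2 < 1"
proof -
  obtain v :: "real^'n2" where "v \<noteq> 0"
    by (metis axis_eq_0_iff zero_neq_one)
  define z where "z = (0 :: real^'n1, v, 0 :: real^'n2)"
  have "err z \<noteq> 0" "vdes z = 0" "snd (snd z) = 0"
    using \<open>v \<noteq> 0\<close> by (simp_all add: z_def aug_def err_def vdes_def)
  then have "0 < (1 - \<alpha>2) * quad_form P (err z)"
    using dissipation_err[of z] sym_posdef_quad_form_nonneg[OF Ppd, of "err_next z"] by simp
  then show ?thesis
    using sym_posdef_quad_form_pos[OF Ppd \<open>err z \<noteq> 0\<close>] by (simp add: zero_less_mult_iff)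
qed

lemma coupling_err:
  "\<gamma>1 * (norm (C *v err z))\<^sup>2 * lambda_min P \<le> \<gamma>1 * (mat_norm C)\<^sup>2 * quad_form P (err z)"
  using mult_left_mono[OF norm_matrix_vector_sq_le_quad_form[OF Ppd, of C "err z"]] pos(3)
  by (simp add: mult.assoc)

lemma coupling_aug:
  "(\<gamma>21 * (norm (vdes z))\<^sup>2 + \<gamma>22 * (norm (snd (snd z)))\<^sup>2) * lambda_min Q
    \<le> (\<gamma>21 * (mat_norm K1)\<^sup>2 + \<gamma>22) * quad_form Q (aug z)"
proof -
  have "(norm (vdes z))\<^sup>2 * lambda_min Q \<le> (mat_norm K1)\<^sup>2 * quad_form Q (aug z)"
    using norm_matrix_vector_sq_le_quad_form[OF Qpd, of K1 "aug z"] by (simp add: vdes_def)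
  moreover have "(norm (snd (snd z)))\<^sup>2 * lambda_min Q \<le> quad_form Q (aug z)"
  proof -
    have "norm (snd (snd z)) \<le> norm (aug z)"
      by (simp add: aug_def norm_le_vappend_right)
    then have "(norm (snd (snd z)))\<^sup>2 * lambda_min Q \<le> lambda_min Q * (norm (aug z))\<^sup>2"
      using sym_posdef_lambda_min(1)[OF Qpd] by (simp add: power_mono mult.commute mult_left_mono)
    also have "\<dots> \<le> quad_form Q (aug z)"
      by (rule sym_posdef_lambda_min(2)[OF Qpd])
    finally show ?thesis .
  qed
  ultimately have "\<gamma>21 * ((norm (vdes z))\<^sup>2 * lambda_min Q) + \<gamma>22 * ((norm (snd (snd z)))\<^sup>2 * lambda_min Q)
      \<le> \<gamma>21 * ((mat_norm K1)\<^sup>2 * quad_form Q (aug z)) + \<gamma>22 * quad_form Q (aug z)"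
    using pos(4,5) by (intro add_mono mult_left_mono) auto
  then show ?thesis
    by (simp add: algebra_simps)
qed

lemma aug_next_level_lt:
  assumes "c1 > 0" and balance: "\<gamma>1 * (mat_norm C)\<^sup>2 * c2 \<le> \<alpha>1 * lambda_min P * c1"
    and z: "z \<in> level_set c1 c2"
  shows "quad_form Q (aug_next z) < c1"
proof -
  have "\<gamma>1 * (norm (C *v err z))\<^sup>2 * lambda_min P \<le> \<gamma>1 * (mat_norm C)\<^sup>2 * quad_form P (err z)"
    by (rule coupling_err)
  also have "\<dots> \<le> \<gamma>1 * (mat_norm C)\<^sup>2 * c2"
    using z pos(3) by (intro mult_left_mono) (auto simp: level_set_def)
  also have "\<dots> \<le> (\<alpha>1 * c1) * lambda_min P"
    using balance by (simp add: algebra_simps)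
  finally have gain: "\<gamma>1 * (norm (C *v err z))\<^sup>2 \<le> \<alpha>1 * c1"
    using mult_le_cancel_right_pos[OF sym_posdef_lambda_min(1)[OF Ppd]] by blast
  show ?thesis
  proof (cases "aug z = 0")
    case True
    then show ?thesis
      using dissipation_aug_le[of z] gain mult_strict_right_mono[OF alpha1_lt_1 \<open>c1 > 0\<close>] by simp
  next
    case False
    have "(1 - \<alpha>1) * quad_form Q (aug z) \<le> (1 - \<alpha>1) * c1"
      using z alpha1_lt_1 by (intro mult_left_mono) (auto simp: level_set_def)
    then show ?thesis
      using dissipation_aug[OF False] gain by (simp add: algebra_simps)
  qed
qed

lemma err_next_level_lt:
  assumes "c2 > 0" and balance: "(\<gamma>21 * (mat_norm K1)\<^sup>2 + \<gamma>22) * c1 \<le> \<alpha>2 * lambda_min Q * c2"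
    and z: "z \<in> level_set c1 c2"
  shows "quad_form P (err_next z) < c2"
proof -
  have "(\<gamma>21 * (norm (vdes z))\<^sup>2 + \<gamma>22 * (norm (snd (snd z)))\<^sup>2) * lambda_min Q
      \<le> (\<gamma>21 * (mat_norm K1)\<^sup>2 + \<gamma>22) * quad_form Q (aug z)"
    by (rule coupling_aug)
  also have "\<dots> \<le> (\<gamma>21 * (mat_norm K1)\<^sup>2 + \<gamma>22) * c1"
    using z pos(4,5) by (intro mult_left_mono) (auto simp: level_set_def)
  also have "\<dots> \<le> (\<alpha>2 * c2) * lambda_min Q"
    using balance by (simp add: algebra_simps)
  finally have gain: "\<gamma>21 * (norm (vdes z))\<^sup>2 + \<gamma>22 * (norm (snd (snd z)))\<^sup>2 \<le> \<alpha>2 * c2"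
    using mult_le_cancel_right_pos[OF sym_posdef_lambda_min(1)[OF Qpd]] by blast
  show ?thesis
  proof (cases "err z = 0")
    case True
    then show ?thesis
      using dissipation_err_le[of z] gain mult_strict_right_mono[OF alpha2_lt_1 \<open>c2 > 0\<close>] by simp
  next
    case False
    have "(1 - \<alpha>2) * quad_form P (err z) \<le> (1 - \<alpha>2) * c2"
      using z alpha2_lt_1 by (intro mult_left_mono) (auto simp: level_set_def)
    then show ?thesis
      using dissipation_err[OF False] gain by (simp add: algebra_simps)
  qed
qed

lemma level_set_norm_bounds:
  assumes "z \<in> level_set c1 c2"
  shows "(norm (aug z))\<^sup>2 \<le> c1 / lambda_min Q" and "(norm (err z))\<^sup>2 \<le> c2 / lambda_min P"
  using assms sym_posdef_lambda_min(2)[OF Qpd, of "aug z"] sym_posdef_lambda_min(2)[OF Ppd, of "err z"]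
    sym_posdef_lambda_min(1)[OF Qpd] sym_posdef_lambda_min(1)[OF Ppd]
  by (auto simp: level_set_def field_simps)

lemma compact_level_set: "compact (level_set c1 c2)"
proof -
  have "closed (level_set c1 c2)"
    unfolding level_set_def by (intro closed_Collect_conj closed_Collect_le continuous_intros)
  moreover have "bounded (level_set c1 c2)"
    unfolding bounded_iff
  proof (intro exI ballI)
    fix z
    assume z: "z \<in> level_set c1 c2"
    have aug_bound: "norm (aug z) \<le> sqrt (c1 / lambda_min Q)" and err_bound: "norm (err z) \<le> sqrt (c2 / lambda_min P)"
      using level_set_norm_bounds[OF z] by (simp_all add: real_le_rsqrt)
    have "norm (fst z) \<le> norm (aug z)" "norm (snd (snd z)) \<le> norm (aug z)"
      by (simp_all add: aug_def norm_le_vappend_left norm_le_vappend_right)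
    moreover have "norm (fst (snd z)) \<le> norm (err z) + norm (snd (snd z))"
      using norm_triangle_ineq[of "err z" "snd (snd z)"] by (simp add: err_def)
    moreover have "norm z \<le> norm (fst z) + norm (fst (snd z)) + norm (snd (snd z))"
      using norm_Pair_le[of "fst z" "snd z"] norm_Pair_le[of "fst (snd z)" "snd (snd z)"] by simp
    ultimately show "norm z \<le> 3 * sqrt (c1 / lambda_min Q) + sqrt (c2 / lambda_min P)"
      using aug_bound err_bound by linarith
  qed
  ultimately show ?thesis
    by (simp add: compact_eq_bounded_closed)
qed

lemma norm_ctrl_le:
  "norm (ctrl z) \<le> (mat_norm K21 * mat_norm K1 + mat_norm K22) * norm (aug z) + mat_norm K22 * norm (err z)"
proof -
  have "norm (ctrl z) \<le> mat_norm K21 * norm (vdes z) + mat_norm K22 * norm (fst (snd z))"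
    unfolding ctrl_def by (rule order_trans[OF norm_triangle_ineq4 add_mono[OF mat_norm_bound mat_norm_bound]])
  also have "\<dots> \<le> mat_norm K21 * (mat_norm K1 * norm (aug z))
      + mat_norm K22 * (norm (err z) + norm (aug z))"
  proof (intro add_mono mult_left_mono mat_norm_nonneg)
    show "norm (vdes z) \<le> mat_norm K1 * norm (aug z)"
      using mat_norm_bound[of K1 "aug z"] by (simp add: vdes_def)
    show "norm (fst (snd z)) \<le> norm (err z) + norm (aug z)"
      using norm_triangle_ineq[of "err z" "snd (snd z)"] norm_le_vappend_right[of "snd (snd z)" "fst z"]
      by (simp add: err_def aug_def)
  qed
  finally show ?thesis
    by (simp add: algebra_simps)
qed

lemma ctrl_in_U_near_0:
  obtains \<delta> where "\<delta> > 0" "\<And>c1 c2 z. c1 \<le> \<delta> \<Longrightarrow> c2 \<le> \<delta> \<Longrightarrow> z \<in> level_set c1 c2 \<Longrightarrow> ctrl z \<in> U"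
proof -
  obtain r where "r > 0" and r: "ball 0 r \<subseteq> U"
    using U_nhd mem_interior by blast
  define L1 where "L1 = mat_norm K21 * mat_norm K1 + mat_norm K22"
  define L2 where "L2 = mat_norm K22"
  define D where "D = 2 * L1\<^sup>2 / lambda_min Q + 2 * L2\<^sup>2 / lambda_min P"
  have "D \<ge> 0"
    using sym_posdef_lambda_min(1)[OF Qpd] sym_posdef_lambda_min(1)[OF Ppd] by (simp add: D_def)
  define \<delta> where "\<delta> = r\<^sup>2 / (D + 1)"
  show thesis
  proof
    show "\<delta> > 0"
      using \<open>r > 0\<close> \<open>D \<ge> 0\<close> by (simp add: \<delta>_def)
    fix c1 c2 z
    assume "c1 \<le> \<delta>" "c2 \<le> \<delta>" and z: "z \<in> level_set c1 c2"
    have "(norm (ctrl z))\<^sup>2 \<le> (L1 * norm (aug z) + L2 * norm (err z))\<^sup>2"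
      using norm_ctrl_le[of z] by (simp add: L1_def L2_def power_mono)
    also have "\<dots> \<le> 2 * L1\<^sup>2 * (norm (aug z))\<^sup>2 + 2 * L2\<^sup>2 * (norm (err z))\<^sup>2"
      using zero_le_power2[of "L1 * norm (aug z) - L2 * norm (err z)"]
      by (simp add: power2_eq_square algebra_simps)
    also have "\<dots> \<le> 2 * L1\<^sup>2 * (\<delta> / lambda_min Q) + 2 * L2\<^sup>2 * (\<delta> / lambda_min P)"
      using level_set_norm_bounds[OF z] \<open>c1 \<le> \<delta>\<close> \<open>c2 \<le> \<delta>\<close>
        sym_posdef_lambda_min(1)[OF Qpd] sym_posdef_lambda_min(1)[OF Ppd]
      by (intro add_mono mult_left_mono) (auto intro: order_trans[OF _ divide_right_mono])
    also have "\<dots> = \<delta> * D"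
      by (simp add: D_def field_simps)
    also have "\<dots> < r\<^sup>2"
      using \<open>r > 0\<close> \<open>D \<ge> 0\<close> by (simp add: \<delta>_def field_simps)
    finally have "norm (ctrl z) < r"
      using \<open>r > 0\<close> by (simp add: power2_less_imp_less)
    then show "ctrl z \<in> U"
      using r by auto
  qed
qed

lemma level_set_contraction:
  assumes "c1 > 0" "c2 > 0"
    and balance1: "\<gamma>1 * (mat_norm C)\<^sup>2 * c2 \<le> \<alpha>1 * lambda_min P * c1"
    and balance2: "(\<gamma>21 * (mat_norm K1)\<^sup>2 + \<gamma>22) * c1 \<le> \<alpha>2 * lambda_min Q * c2"
  obtains l1 l2 where "0 < l1" "l1 < 1" "0 < l2" "l2 < 1"
    "\<And>z. z \<in> level_set c1 c2 \<Longrightarrow> quad_form Q (aug_next z) \<le> l1\<^sup>2 * c1"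
    "\<And>z. z \<in> level_set c1 c2 \<Longrightarrow> quad_form P (err_next z) \<le> l2\<^sup>2 * c2"
proof -
  have "continuous_on (level_set c1 c2) (\<lambda>z. quad_form Q (aug_next z))"
    by (intro continuous_intros)
  moreover have "\<And>z. z \<in> level_set c1 c2 \<Longrightarrow> quad_form Q (aug_next z) < c1"
    using aug_next_level_lt[OF \<open>c1 > 0\<close> balance1] .
  ultimately obtain l1 where "0 < l1" "l1 < 1"
    "\<And>z. z \<in> level_set c1 c2 \<Longrightarrow> quad_form Q (aug_next z) \<le> l1\<^sup>2 * c1"
    using compact_uniform_contraction_factor[OF compact_level_set _ \<open>c1 > 0\<close>] by blast
  have "continuous_on (level_set c1 c2) (\<lambda>z. quad_form P (err_next z))"
    by (intro continuous_intros)
  moreover have "\<And>z. z \<in> level_set c1 c2 \<Longrightarrow> quad_form P (err_next z) < c2"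
    using err_next_level_lt[OF \<open>c2 > 0\<close> balance2] .
  ultimately obtain l2 where "0 < l2" "l2 < 1"
    "\<And>z. z \<in> level_set c1 c2 \<Longrightarrow> quad_form P (err_next z) \<le> l2\<^sup>2 * c2"
    using compact_uniform_contraction_factor[OF compact_level_set _ \<open>c2 > 0\<close>] by blast
  show thesis
    by (rule that) fact+
qed

lemma contractive_invariant_sets:
  "\<exists>(G1 :: (real^('n1 + 'n2)) set) (G2 :: (real^'n2) set) lam1 lam2.
     0 \<in> interior G1 \<and> 0 \<in> interior G2 \<and>
     0 \<le> lam1 \<and> lam1 < 1 \<and> 0 \<le> lam2 \<and> lam2 < 1 \<and>
     (\<forall>(x1::real^'n1) (x2::real^'n2) (xf::real^'n2).
        vappend x1 xf \<in> G1 \<and> x2 - xf \<in> G2 \<longrightarrow>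
        (let xa = vappend x1 xf;
             vd = - (K1 *v xa); u = K21 *v vd - K22 *v x2;
             x1' = A1 *v x1 + B1 *v (C *v x2); x2' = A2 *v x2 + B2 *v u;
             xf' = Af *v xf + Bf *v vd
         in u \<in> U \<and> vappend x1' xf' \<in> (\<lambda>x. lam1 *\<^sub>R x) ` G1 \<and>
            x2' - xf' \<in> (\<lambda>x. lam2 *\<^sub>R x) ` G2))"
proof -
  obtain \<rho> where "\<rho> > 0" and \<rho>: "\<gamma>1 * (mat_norm C)\<^sup>2 * \<rho> \<le> \<alpha>1 * lambda_min P"
      "\<gamma>21 * (mat_norm K1)\<^sup>2 + \<gamma>22 \<le> \<alpha>2 * lambda_min Q * \<rho>"
    using small_gain_balance[of "\<gamma>1 * (mat_norm C)\<^sup>2" "\<gamma>21 * (mat_norm K1)\<^sup>2 + \<gamma>22"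
        "\<alpha>1 * lambda_min P" "\<alpha>2 * lambda_min Q"]
      pos smallgain sym_posdef_lambda_min(1)[OF Ppd] sym_posdef_lambda_min(1)[OF Qpd]
    by (auto simp: algebra_simps)
  obtain \<delta> where "\<delta> > 0" and ctrl_in_U: "\<And>c1 c2 z. c1 \<le> \<delta> \<Longrightarrow> c2 \<le> \<delta> \<Longrightarrow> z \<in> level_set c1 c2 \<Longrightarrow> ctrl z \<in> U"
    using ctrl_in_U_near_0 by blast
  define c1 where "c1 = \<delta> / (1 + \<rho>)"
  define c2 where "c2 = \<rho> * c1"
  have "c1 > 0" "c2 > 0" "c1 \<le> \<delta>" "c2 \<le> \<delta>"
    using \<open>\<delta> > 0\<close> \<open>\<rho> > 0\<close> by (auto simp: c1_def c2_def field_simps)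
  moreover have "\<gamma>1 * (mat_norm C)\<^sup>2 * c2 \<le> \<alpha>1 * lambda_min P * c1"
    using mult_right_mono[OF \<rho>(1), of c1] \<open>c1 > 0\<close> by (simp add: c2_def algebra_simps)
  moreover have "(\<gamma>21 * (mat_norm K1)\<^sup>2 + \<gamma>22) * c1 \<le> \<alpha>2 * lambda_min Q * c2"
    using mult_right_mono[OF \<rho>(2), of c1] \<open>c1 > 0\<close> by (simp add: c2_def algebra_simps)
  ultimately obtain l1 l2 where l: "0 < l1" "l1 < 1" "0 < l2" "l2 < 1"
    and next_levels: "\<And>z. z \<in> level_set c1 c2 \<Longrightarrow> quad_form Q (aug_next z) \<le> l1\<^sup>2 * c1"
      "\<And>z. z \<in> level_set c1 c2 \<Longrightarrow> quad_form P (err_next z) \<le> l2\<^sup>2 * c2"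
    using level_set_contraction by metis
  show ?thesis
  proof (rule exI[of _ "{x. quad_form Q x \<le> c1}"], rule exI[of _ "{x. quad_form P x \<le> c2}"],
      rule exI[of _ l1], rule exI[of _ l2], intro conjI allI impI)
    show "0 \<in> interior {x. quad_form Q x \<le> c1}" "0 \<in> interior {x. quad_form P x \<le> c2}"
      using \<open>c1 > 0\<close> \<open>c2 > 0\<close> by (simp_all add: zero_in_interior_quad_form_sublevel)
    fix x1 :: "real^'n1" and x2 xf :: "real^'n2"
    assume "vappend x1 xf \<in> {x. quad_form Q x \<le> c1} \<and> x2 - xf \<in> {x. quad_form P x \<le> c2}"
    then have z: "(x1, x2, xf) \<in> level_set c1 c2"
      by (simp add: level_set_def aug_def err_def)
    have "ctrl (x1, x2, xf) \<in> U"
      "aug_next (x1, x2, xf) \<in> (\<lambda>x. l1 *\<^sub>R x) ` {x. quad_form Q x \<le> c1}"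
      "err_next (x1, x2, xf) \<in> (\<lambda>x. l2 *\<^sub>R x) ` {x. quad_form P x \<le> c2}"
      using ctrl_in_U[OF \<open>c1 \<le> \<delta>\<close> \<open>c2 \<le> \<delta>\<close> z] next_levels[OF z] l
      by (simp_all add: quad_form_sublevel_scaleR)
    then show "let xa = vappend x1 xf;
             vd = - (K1 *v xa); u = K21 *v vd - K22 *v x2;
             x1' = A1 *v x1 + B1 *v (C *v x2); x2' = A2 *v x2 + B2 *v u;
             xf' = Af *v xf + Bf *v vd
         in u \<in> U \<and> vappend x1' xf' \<in> (\<lambda>x. l1 *\<^sub>R x) ` {x. quad_form Q x \<le> c1} \<and>
            x2' - xf' \<in> (\<lambda>x. l2 *\<^sub>R x) ` {x. quad_form P x \<le> c2}"
      by (simp add: Let_def state_map_defs)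
  qed (use l in auto)
qed

end

theorem proposition4:
  fixes A1 :: "real^'n1^'n1" and B1 :: "real^'m^'n1"
    and A2 :: "real^'n2^'n2" and B2 :: "real^'p^'n2"
    and C :: "real^'n2^'m"
    and Af :: "real^'n2^'n2" and Bf :: "real^'m^'n2"
    and U :: "(real^'p) set"
    and K1 :: "real^('n1 + 'n2)^'m" and K21 :: "real^'m^'p" and K22 :: "real^'n2^'p"
    and Q :: "real^('n1 + 'n2)^('n1 + 'n2)" and P :: "real^'n2^'n2"
    and \<alpha>1 \<alpha>2 \<gamma>1 \<gamma>21 \<gamma>22 :: real
  assumes A1: "stabilizable A1 B1"
    and A2: "controllable A2 B2"
    and A3: "block_ccf A2 B2"
    and A4: "schur_stable Af"
    and A5: "\<forall>z. invariant_zero Af Bf C z \<longrightarrow> \<not> unstable_pole A1 z"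
    and A8: "0 \<in> interior U"
    and gain1: "schur_stable (A1aug A1 B1 C Af - B1aug B1 ** K1)"
    and gain2: "schur_stable (A2 - B2 ** K22)"
    and Qpd: "sym_posdef Q" and Ppd: "sym_posdef P"
    and pos: "\<alpha>1 > 0" "\<alpha>2 > 0" "\<gamma>1 > 0" "\<gamma>21 > 0" "\<gamma>22 \<ge> 0"
    and lyap: "\<And>(x1::real^'n1) (x2::real^'n2) (xf::real^'n2).
      let xa = vappend x1 xf; xt = x2 - xf;
          vd = - (K1 *v xa); u = K21 *v vd - K22 *v x2;
          x1' = A1 *v x1 + B1 *v (C *v x2); x2' = A2 *v x2 + B2 *v u;
          xf' = Af *v xf + Bf *v vd;
          xa' = vappend x1' xf'; xt' = x2' - xf'
      in (xa \<noteq> 0 \<longrightarrow>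
            xa' \<bullet> (Q *v xa') - xa \<bullet> (Q *v xa)
              < - \<alpha>1 * (xa \<bullet> (Q *v xa)) + \<gamma>1 * (norm (C *v xt))\<^sup>2) \<and>
         (xt \<noteq> 0 \<longrightarrow>
            xt' \<bullet> (P *v xt') - xt \<bullet> (P *v xt)
              < - \<alpha>2 * (xt \<bullet> (P *v xt)) + \<gamma>21 * (norm vd)\<^sup>2 + \<gamma>22 * (norm xf)\<^sup>2)"
    and smallgain: "\<alpha>1 * \<alpha>2 * lambda_min P * lambda_min Q
                     \<ge> \<gamma>1 * (mat_norm C)\<^sup>2 * (\<gamma>21 * (mat_norm K1)\<^sup>2 + \<gamma>22)"
  shows "\<exists>(G1 :: (real^('n1 + 'n2)) set) (G2 :: (real^'n2) set) lam1 lam2.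
           0 \<in> interior G1 \<and> 0 \<in> interior G2 \<and>
           0 \<le> lam1 \<and> lam1 < 1 \<and> 0 \<le> lam2 \<and> lam2 < 1 \<and>
           (\<forall>(x1::real^'n1) (x2::real^'n2) (xf::real^'n2).
              vappend x1 xf \<in> G1 \<and> x2 - xf \<in> G2 \<longrightarrow>
              (let xa = vappend x1 xf;
                   vd = - (K1 *v xa); u = K21 *v vd - K22 *v x2;
                   x1' = A1 *v x1 + B1 *v (C *v x2); x2' = A2 *v x2 + B2 *v u;
                   xf' = Af *v xf + Bf *v vd
               in u \<in> U \<and> vappend x1' xf' \<in> (\<lambda>x. lam1 *\<^sub>R x) ` G1 \<and>
                  x2' - xf' \<in> (\<lambda>x. lam2 *\<^sub>R x) ` G2))"
  \<comment> \<open>Assumptions 1--5 and the stability of the closed-loop gains are what make the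
     dissipation inequalities achievable; once these are assumed they are no longer needed.\<close>
proof -
  interpret cascade_small_gain A1 B1 A2 B2 C Af Bf U K1 K21 K22 Q P \<alpha>1 \<alpha>2 \<gamma>1 \<gamma>21 \<gamma>22
    using A8 Qpd Ppd pos lyap smallgain by unfold_locales
  show ?thesis
    by (rule contractive_invariant_sets)
qed

end
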